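(* Let $0<\varepsilon\le 0.1$, let $\Box$ be a closed axis-parallel square of side length $\varepsilon$ with center $o$, let $R\subseteq\Box$ be a nonempty circular domain, let $\Lambda\ge 10$ be an integer, and let $\gamma_1,\dots,\gamma_\Lambda$ be a $\Lambda$-decomposition of $\partial(R\oplus D)$ with division points $p_1,\dots,p_\Lambda$. Set $\varepsilon'=7(\tfrac1\Lambda+\varepsilon)$. Then for every $i\in[\Lambda]$, $\gamma_i$ is $\vec v$-monotone for every $\vec v\in\mathbb{S}^1$ with $\varepsilon'\le\mathsf{ang}(\overrightarrow{op_i},\vec v)\le\pi-\varepsilon'$ or $\pi+\varepsilon'\le\mathsf{ang}(\overrightarrow{op_i},\vec v)\le2\pi-\varepsilon'$.
   Context: A circular arc is a connected portion of a circle (segments included); a circular domain is a closed subset of $\mathbb{R}^2$ whose boundary consists of finitely many circular arcs intersecting only at endpoints. $D$ is the closed unit disk at the origin, $\oplus$ is Minkowski sum. Every ray from $o$ meets $\partial(R\oplus D)$ in exactly one point. For nonzero vectors $\vec u,\vec v$, $\mathsf{ang}(\vec u,\vec v)\in[0,2\pi)$ is the clockwise ordered angle from $\vec u$ to $\vec v$. A $\Lambda$-decomposition of $\partial(R\oplus D)$: shoot $\Lambda$ rays from $o$ dividing the full angle around $o$ into $\Lambda$ angles of size $2\pi/\Lambda$; they meet $\partial(R\oplus D)$ at points $p_1,\dots,p_\Lambda$ with $\mathsf{ang}(\overrightarrow{op_{i-1}},\overrightarrow{op_i})=2\pi/\Lambda$ (indices mod $\Lambda$, $p_0=p_\Lambda$);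 $\gamma_i$ is the portion of $\partial(R\oplus D)$ between $p_{i-1}$ and $p_i$ (the one containing no other $p_j$). A curve $\gamma$ is $\vec v$-monotone if there is a homeomorphism $f:[0,1]\to\gamma$ with $\langle\vec v,f(a)\rangle<\langle\vec v,f(b)\rangle$ whenever $a<b$. *)

theory Defs
  imports "HOL-Analysis.Analysis"
begin

text \<open>The plane is modelled by the type complex (x = Re, y = Im, standard orientation).\<close>

definition circular_arc :: "complex set \<Rightarrow> bool" where
  "circular_arc A \<longleftrightarrow>
     (\<exists>g. arc g \<and> path_image g = A) \<and>
     ((\<exists>c r. r > 0 \<and> A \<subseteq> sphere c r) \<or> collinear A)"

definition arc_endpoints :: "complex set \<Rightarrow> complex set" where
  "arc_endpoints A = {x. \<exists>g. arc g \<and> path_image g = A \<and> (x = pathstart g \<or> x = pathfinish g)}"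

definition circular_domain :: "complex set \<Rightarrow> bool" where
  "circular_domain R \<longleftrightarrow> closed R \<and>
     (\<exists>\<A>. finite \<A> \<and> (\<forall>A\<in>\<A>. circular_arc A) \<and> frontier R = \<Union>\<A> \<and>
        (\<forall>A\<in>\<A>. \<forall>B\<in>\<A>. A \<noteq> B \<longrightarrow> A \<inter> B \<subseteq> arc_endpoints A \<inter> arc_endpoints B))"

definition minkowski_sum :: "complex set \<Rightarrow> complex set \<Rightarrow> complex set" (infixl "\<oplus>" 65) where
  "A \<oplus> B = {a + b | a b. a \<in> A \<and> b \<in> B}"

definition unit_disk :: "complex set" where
  "unit_disk = cball 0 1"

definition axis_square :: "complex \<Rightarrow> real \<Rightarrow> complex set" where
  "axis_square ctr s = {z. \<bar>Re z - Re ctr\<bar> \<le> s / 2 \<and> \<bar>Im z - Im ctr\<bar> \<le> s / 2}"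

text \<open>Clockwise ordered angle from u to v, in [0, 2 pi): the theta with
  v/|v| = (u/|u|) * exp(-i theta), i.e. theta = Arg2pi (u / v).\<close>
definition ang :: "complex \<Rightarrow> complex \<Rightarrow> real" where
  "ang u v = Arg2pi (u / v)"

definition monotone_in_dir :: "complex \<Rightarrow> complex set \<Rightarrow> bool" where
  "monotone_in_dir v \<gamma> \<longleftrightarrow>
     (\<exists>f g. homeomorphism {0..1::real} \<gamma> f g \<and>
        (\<forall>a b. 0 \<le> a \<longrightarrow> a < b \<longrightarrow> b \<le> 1 \<longrightarrow> inner v (f a) < inner v (f b)))"

end

theory Submission
  imports Defs
begin

text \<open>Seen from the centre c, the set S = R + D is star-shaped. If R lies within distance eps
  of c, the ray from c in direction e leaves the unit disk around a point a of R at distance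
  <a,e> + sqrt (<a,e>^2 + 1 - |a|^2), a 2 eps-Lipschitz function of e; hence the radius of the
  boundary of S in direction e is at least 1 - eps and is 2 eps-Lipschitz in e. In particular
  every ray meets the boundary once, so the piece gamma_i, which avoids p_(i+1), stays inside
  the sector of angle 2 pi / Lambda between the rays through p_(i-1) and p_i. Two points of that
  sector with the same projection onto v span a chord orthogonal to v; as v makes an angle of at
  least 7 eps with every direction of the sector, the radius would have to change faster than
  the Lipschitz bound allows. So <v,-> is injective on the arc gamma_i, hence strictly monotone
  along it.\<close>

section \<open>The radial function of R plus the unit disk\<close>

lemma abs_sqrt_sq_add_diff_le:
  fixes s t k :: real
  assumes "0 \<le> k"
  shows "\<bar>sqrt (s\<^sup>2 + k) - sqrt (t\<^sup>2 + k)\<bar> \<le> \<bar>s - t\<bar>"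
proof -
  have "sqrt (u\<^sup>2 + k) = cmod (Complex u (sqrt k))" for u
    using assms by (simp add: cmod_def)
  then show ?thesis
    using norm_triangle_ineq3[of "Complex s (sqrt k)" "Complex t (sqrt k)"]
    by (simp add: cmod_def)
qed

text \<open>For norm a < 1 and a unit vector e, the ray from 0 in direction e leaves the unit ball
  around a at distance unit_ball_exit a e.\<close>
definition unit_ball_exit :: "'a::real_inner \<Rightarrow> 'a \<Rightarrow> real" where
  "unit_ball_exit a e = inner a e + sqrt ((inner a e)\<^sup>2 + (1 - (norm a)\<^sup>2))"

lemma unit_ball_exit_lipschitz:
  fixes a e1 e2 :: "'a::real_inner"
  assumes "norm a \<le> 1"
  shows "\<bar>unit_ball_exit a e1 - unit_ball_exit a e2\<bar> \<le> 2 * norm a * norm (e1 - e2)"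
proof -
  have k: "0 \<le> 1 - (norm a)\<^sup>2"
    using assms by (simp add: abs_square_le_1)
  have "\<bar>unit_ball_exit a e1 - unit_ball_exit a e2\<bar> \<le> 2 * \<bar>inner a e1 - inner a e2\<bar>"
    using abs_sqrt_sq_add_diff_le[OF k, of "inner a e1" "inner a e2"]
    unfolding unit_ball_exit_def by (smt (verit))
  also have "\<dots> \<le> 2 * (norm a * norm (e1 - e2))"
    by (simp add: Cauchy_Schwarz_ineq2 flip: inner_diff_right)
  finally show ?thesis
    by simp
qed

lemma power2_norm_scaleR_diff:
  fixes a e :: "'a::real_inner"
  assumes "norm e = 1"
  shows "(norm (\<rho> *\<^sub>R e - a))\<^sup>2 = (\<rho> - inner a e)\<^sup>2 - ((inner a e)\<^sup>2 + (1 - (norm a)\<^sup>2)) + 1"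
proof -
  have "inner e e = 1"
    using assms by (simp add: power2_norm_eq_inner[symmetric])
  then show ?thesis
    unfolding power2_norm_eq_inner
    by (simp add: inner_diff_left inner_diff_right inner_commute
        power2_eq_square algebra_simps)
qed

lemma le_unit_ball_exit:
  fixes a e :: "'a::real_inner"
  assumes "norm e = 1" "norm (\<rho> *\<^sub>R e - a) \<le> 1"
  shows "\<rho> \<le> unit_ball_exit a e"
proof -
  have "(norm (\<rho> *\<^sub>R e - a))\<^sup>2 \<le> 1"
    using assms(2) by (simp add: power_le_one)
  then have "(\<rho> - inner a e)\<^sup>2 \<le> (inner a e)\<^sup>2 + (1 - (norm a)\<^sup>2)"
    using power2_norm_scaleR_diff[OF assms(1)] by simp
  then have "\<rho> - inner a e \<le> sqrt ((inner a e)\<^sup>2 + (1 - (norm a)\<^sup>2))"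
    by (metis abs_le_D1 real_sqrt_abs real_sqrt_le_mono)
  then show ?thesis
    unfolding unit_ball_exit_def by simp
qed

lemma norm_scaleR_diff_less_one:
  fixes a e :: "'a::real_inner"
  assumes "norm a < 1" "norm e = 1" "0 \<le> \<rho>" "\<rho> < unit_ball_exit a e"
  shows "norm (\<rho> *\<^sub>R e - a) < 1"
proof -
  define s where "s = inner a e"
  define q where "q = sqrt (s\<^sup>2 + (1 - (norm a)\<^sup>2))"
  have "0 < 1 - (norm a)\<^sup>2"
    using assms(1) by (simp add: abs_square_less_1)
  then have q: "\<bar>s\<bar> < q" "q\<^sup>2 = s\<^sup>2 + (1 - (norm a)\<^sup>2)"
    unfolding q_def by (auto intro!: real_less_rsqrt)
  have "\<bar>\<rho> - s\<bar> < q"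
    using assms(3,4) q(1) unfolding unit_ball_exit_def s_def[symmetric] q_def[symmetric] by linarith
  then have "(\<rho> - s)\<^sup>2 < q\<^sup>2"
    by (metis abs_ge_zero power2_abs power_strict_mono zero_less_numeral)
  then have "(norm (\<rho> *\<^sub>R e - a))\<^sup>2 < 1"
    using power2_norm_scaleR_diff[OF assms(2), of \<rho> a] q(2) unfolding s_def by linarith
  then show ?thesis
    by (simp add: power_less_one_iff)
qed

lemma mem_minkowski_unit_disk_iff: "x \<in> R \<oplus> unit_disk \<longleftrightarrow> (\<exists>r\<in>R. norm (x - r) \<le> 1)"
  unfolding minkowski_sum_def unit_disk_def
  by (force simp: dist_norm intro: exI[of _ "x - r" for r])

lemma compact_minkowski_unit_disk: "compact R \<Longrightarrow> compact (R \<oplus> unit_disk)"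
  unfolding minkowski_sum_def unit_disk_def by (intro compact_sums) auto

lemma frontier_minkowski_unit_disk_norm_diff_ge:
  assumes "x \<in> frontier (R \<oplus> unit_disk)" "r \<in> R"
  shows "1 \<le> norm (x - r)"
proof (rule ccontr)
  assume "\<not> 1 \<le> norm (x - r)"
  then have "x \<in> ball r 1"
    by (simp add: dist_norm norm_minus_commute)
  moreover have "ball r 1 \<subseteq> R \<oplus> unit_disk"
    using assms(2) by (force simp: mem_minkowski_unit_disk_iff dist_norm norm_minus_commute)
  ultimately have "x \<in> interior (R \<oplus> unit_disk)"
    using interior_maximal by blast
  then show False
    using assms(1) by (simp add: frontier_def)
qed

lemma scaleR_norm_sgn: "norm x *\<^sub>R sgn x = (x::'a::real_normed_vector)"
  by (cases "x = 0") (simp_all add: sgn_div_norm)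

lemma frontier_minkowski_unit_disk_subset:
  "compact R \<Longrightarrow> frontier (R \<oplus> unit_disk) \<subseteq> R \<oplus> unit_disk"
  by (simp add: compact_imp_closed compact_minkowski_unit_disk frontier_subset_closed)

lemma frontier_minkowski_unit_disk_norm_ge:
  assumes "compact R" "R \<subseteq> cball c \<epsilon>" "x \<in> frontier (R \<oplus> unit_disk)"
  shows "1 - \<epsilon> \<le> norm (x - c)"
proof -
  obtain r where "r \<in> R"
    using assms(1,3) frontier_minkowski_unit_disk_subset by (force simp: mem_minkowski_unit_disk_iff)
  then have "1 \<le> norm (x - r)" "norm (r - c) \<le> \<epsilon>"
    using frontier_minkowski_unit_disk_norm_diff_ge[OF assms(3)] assms(2)
    by (auto simp: dist_norm norm_minus_commute)
  then show ?thesis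
    using norm_triangle_ineq[of "x - c" "c - r"] by (simp add: norm_minus_commute)
qed

lemma frontier_minkowski_unit_disk_radial_lipschitz:
  assumes "compact R" "R \<subseteq> cball c \<epsilon>" "\<epsilon> < 1"
    and "x \<in> frontier (R \<oplus> unit_disk)" "y \<in> frontier (R \<oplus> unit_disk)"
  shows "\<bar>norm (y - c) - norm (x - c)\<bar> \<le> 2 * \<epsilon> * norm (sgn (y - c) - sgn (x - c))"
proof -
  have *: "norm (y - c) - norm (x - c) \<le> 2 * \<epsilon> * norm (sgn (y - c) - sgn (x - c))"
    if x: "x \<in> frontier (R \<oplus> unit_disk)" and y: "y \<in> frontier (R \<oplus> unit_disk)" for x y
  proof -
    have "y \<in> R \<oplus> unit_disk"
      using y frontier_minkowski_unit_disk_subset assms(1) by blast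
    then obtain r where r: "r \<in> R" "norm (y - r) \<le> 1"
      by (auto simp: mem_minkowski_unit_disk_iff)
    define a where "a = r - c"
    have a: "norm a \<le> \<epsilon>"
      using r(1) assms(2) by (auto simp: a_def dist_norm norm_minus_commute)
    have "1 - \<epsilon> \<le> norm (x - c)" "1 - \<epsilon> \<le> norm (y - c)"
      using frontier_minkowski_unit_disk_norm_ge assms(1,2) x y by blast+
    then have e: "norm (sgn (x - c)) = 1" "norm (sgn (y - c)) = 1"
      using assms(3) by (auto simp: norm_sgn)
    have "norm (y - c) \<le> unit_ball_exit a (sgn (y - c))"
      using le_unit_ball_exit[OF e(2), of "norm (y - c)" a] r(2)
      by (simp add: scaleR_norm_sgn a_def algebra_simps)
    moreover have "unit_ball_exit a (sgn (x - c)) \<le> norm (x - c)"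
    proof (rule ccontr)
      assume "\<not> unit_ball_exit a (sgn (x - c)) \<le> norm (x - c)"
      then have "norm (x - r) < 1"
        using norm_scaleR_diff_less_one[OF _ e(1), of a "norm (x - c)"] a assms(3)
        by (simp add: scaleR_norm_sgn a_def algebra_simps)
      then show False
        using frontier_minkowski_unit_disk_norm_diff_ge[OF x r(1)] by simp
    qed
    moreover have "unit_ball_exit a (sgn (y - c)) - unit_ball_exit a (sgn (x - c))
        \<le> 2 * \<epsilon> * norm (sgn (y - c) - sgn (x - c))"
      using unit_ball_exit_lipschitz[of a "sgn (y - c)" "sgn (x - c)"] a assms(3)
        mult_right_mono[of "norm a" \<epsilon> "norm (sgn (y - c) - sgn (x - c))"]
      by (simp add: abs_le_iff)
    ultimately show ?thesis
      by linarith
  qed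
  show ?thesis
    using *[OF assms(4,5)] *[OF assms(5,4)] by (simp add: norm_minus_commute abs_le_iff)
qed

lemma frontier_minkowski_unit_disk_eq_if_sgn_eq:
  assumes "compact R" "R \<subseteq> cball c \<epsilon>" "\<epsilon> < 1"
    and "x \<in> frontier (R \<oplus> unit_disk)" "y \<in> frontier (R \<oplus> unit_disk)"
    and "sgn (x - c) = sgn (y - c)"
  shows "x = y"
proof -
  have "norm (x - c) = norm (y - c)"
    using frontier_minkowski_unit_disk_radial_lipschitz[OF assms(1-5)] assms(6) by simp
  then have "x - c = y - c"
    using assms(6) scaleR_norm_sgn by metis
  then show ?thesis
    by simp
qed

section \<open>Chords orthogonal to a direction\<close>

lemma inner_mult_cis_polar:
  assumes "norm W = 1"
  shows "inner (W * cis \<alpha>) (of_real \<rho> * (W * cis \<psi>)) = \<rho> * cos (\<psi> - \<alpha>)"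
proof -
  have "cnj W * W = 1"
    using assms complex_norm_square[of W] by (simp add: mult.commute)
  then have "cnj (W * cis \<alpha>) * (of_real \<rho> * (W * cis \<psi>))
      = of_real \<rho> * (cnj W * W) * (cis (- \<alpha>) * cis \<psi>)"
    by (simp add: cis_cnj algebra_simps)
  also have "\<dots> = of_real \<rho> * cis (\<psi> - \<alpha>)"
    using \<open>cnj W * W = 1\<close> by (simp add: cis_mult)
  finally have eq: "cnj (W * cis \<alpha>) * (of_real \<rho> * (W * cis \<psi>)) = of_real \<rho> * cis (\<psi> - \<alpha>)" .
  have "inner u z = Re (cnj u * z)" for u z :: complex
    by (simp add: inner_complex_def)
  then show ?thesis
    by (simp only: eq) simp
qed

lemma norm_cis_diff: "norm (cis a - cis b) = 2 * \<bar>sin ((a - b) / 2)\<bar>"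
proof -
  have "cis a - cis b = cis b * (cis (a - b) - 1)"
    by (simp add: right_diff_distrib cis_mult)
  then have "norm (cis a - cis b) = norm (exp (\<i> * of_real (a - b)) - 1)"
    by (simp add: norm_mult cis_conv_exp)
  then show ?thesis
    using dist_exp_i_1[of "a - b"] by simp
qed

lemma polar_cos_eq_sum_to_product:
  fixes \<rho>x \<rho>y \<psi>x \<psi>y \<gamma> :: real
  assumes "\<rho>y * cos (\<psi>y + \<gamma>) = \<rho>x * cos (\<psi>x + \<gamma>)"
  shows "\<rho>y * (2 * sin ((\<psi>y + \<psi>x) / 2 + \<gamma>) * sin ((\<psi>y - \<psi>x) / 2)) = (\<rho>y - \<rho>x) * cos (\<psi>x + \<gamma>)"
proof -
  define M where "M = (\<psi>y + \<psi>x) / 2 + \<gamma>"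
  define h where "h = (\<psi>y - \<psi>x) / 2"
  have "(\<psi>y + \<gamma> + (\<psi>x + \<gamma>)) / 2 = M" "(\<psi>x + \<gamma> - (\<psi>y + \<gamma>)) / 2 = - h"
    unfolding M_def h_def by (simp_all add: field_simps)
  then have "cos (\<psi>y + \<gamma>) - cos (\<psi>x + \<gamma>) = 2 * sin M * sin (- h)"
    by (simp only: cos_diff_cos)
  then have "2 * sin M * sin h = cos (\<psi>x + \<gamma>) - cos (\<psi>y + \<gamma>)"
    by simp
  then show ?thesis
    using assms unfolding M_def[symmetric] h_def[symmetric]
    by (simp add: right_diff_distrib left_diff_distrib)
qed

text \<open>With M the mean and h the half difference of the angles, sum-to-product turns the chord
  condition into 2 rho_y |sin M| |sin h| <= |rho_y - rho_x| <= 4 eps |sin h|; since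
  rho_y |sin M| >= (1 - eps) kappa > 2 eps, this forces sin h = 0.\<close>
lemma polar_cos_eq_imp_eq:
  fixes \<rho>x \<rho>y \<psi>x \<psi>y \<gamma> \<epsilon> \<kappa> :: real
  assumes cos_eq: "\<rho>y * cos (\<psi>y + \<gamma>) = \<rho>x * cos (\<psi>x + \<gamma>)"
    and radii: "\<bar>\<rho>y - \<rho>x\<bar> \<le> 2 * \<epsilon> * norm (cis \<psi>y - cis \<psi>x)"
    and eps: "0 \<le> \<epsilon>" "\<epsilon> < 1" "1 - \<epsilon> \<le> \<rho>y"
    and mid: "\<kappa> \<le> \<bar>sin ((\<psi>y + \<psi>x) / 2 + \<gamma>)\<bar>" "2 * \<epsilon> < (1 - \<epsilon>) * \<kappa>"
    and close: "\<bar>\<psi>y - \<psi>x\<bar> < 2 * pi"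
  shows "\<psi>x = \<psi>y \<and> \<rho>x = \<rho>y"
proof -
  define M where "M = (\<psi>y + \<psi>x) / 2 + \<gamma>"
  define h where "h = (\<psi>y - \<psi>x) / 2"
  have "\<rho>y * (2 * sin M * sin h) = (\<rho>y - \<rho>x) * cos (\<psi>x + \<gamma>)"
    using polar_cos_eq_sum_to_product[OF cos_eq] unfolding M_def h_def .
  then have "\<bar>\<rho>y\<bar> * 2 * \<bar>sin M\<bar> * \<bar>sin h\<bar> = \<bar>\<rho>y - \<rho>x\<bar> * \<bar>cos (\<psi>x + \<gamma>)\<bar>"
    by (metis abs_mult abs_numeral mult.assoc)
  then have "\<rho>y * 2 * \<bar>sin M\<bar> * \<bar>sin h\<bar> = \<bar>\<rho>y - \<rho>x\<bar> * \<bar>cos (\<psi>x + \<gamma>)\<bar>"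
    using eps by simp
  also have "\<dots> \<le> \<bar>\<rho>y - \<rho>x\<bar>"
    by (simp add: mult_left_le)
  also have "\<dots> \<le> 2 * \<epsilon> * (2 * \<bar>sin h\<bar>)"
    using radii unfolding norm_cis_diff h_def .
  finally have key: "(\<rho>y * \<bar>sin M\<bar>) * \<bar>sin h\<bar> \<le> (2 * \<epsilon>) * \<bar>sin h\<bar>"
    by simp
  have "sin h = 0"
  proof (rule ccontr)
    assume "sin h \<noteq> 0"
    then have "\<rho>y * \<bar>sin M\<bar> \<le> 2 * \<epsilon>"
      using key by simp
    moreover have "0 \<le> \<kappa>"
      using mid(2) eps by (smt (verit) mult_nonneg_nonpos)
    then have "(1 - \<epsilon>) * \<kappa> \<le> \<rho>y * \<bar>sin M\<bar>"
      using eps mid(1) unfolding M_def by (intro mult_mono) auto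
    ultimately show False
      using mid(2) by linarith
  qed
  moreover have "\<bar>h\<bar> < pi"
    using close unfolding h_def by simp
  ultimately have "h = 0"
    using sin_eq_0_pi by fastforce
  then show ?thesis
    using radii unfolding h_def by simp
qed

lemma frontier_minkowski_unit_disk_inner_eq_imp_eq:
  fixes W :: complex
  assumes R: "compact R" "R \<subseteq> cball c \<epsilon>" "0 \<le> \<epsilon>" "\<epsilon> < 1"
    and F: "x \<in> frontier (R \<oplus> unit_disk)" "y \<in> frontier (R \<oplus> unit_disk)"
    and W: "norm W = 1" "sgn (x - c) = W * cis \<psi>x" "sgn (y - c) = W * cis \<psi>y"
    and sector: "\<psi>x \<in> {\<theta>0..\<theta>1}" "\<psi>y \<in> {\<theta>0..\<theta>1}" "\<theta>1 - \<theta>0 < 2 * pi"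
    and kappa: "\<forall>\<psi>\<in>{\<theta>0..\<theta>1}. \<kappa> \<le> \<bar>sin (\<psi> + \<gamma>)\<bar>" "2 * \<epsilon> < (1 - \<epsilon>) * \<kappa>"
    and eq: "inner (W * cis (- \<gamma>)) x = inner (W * cis (- \<gamma>)) y"
  shows "x = y"
proof -
  define \<rho>x where "\<rho>x = norm (x - c)"
  define \<rho>y where "\<rho>y = norm (y - c)"
  have polar: "x - c = of_real \<rho>x * (W * cis \<psi>x)" "y - c = of_real \<rho>y * (W * cis \<psi>y)"
    using scaleR_norm_sgn[of "x - c"] scaleR_norm_sgn[of "y - c"] W(2,3)
    unfolding \<rho>x_def \<rho>y_def by (simp_all add: scaleR_conv_of_real)
  have "inner (W * cis (- \<gamma>)) (x - c) = inner (W * cis (- \<gamma>)) (y - c)"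
    using eq by (simp add: inner_diff_right)
  then have "\<rho>y * cos (\<psi>y + \<gamma>) = \<rho>x * cos (\<psi>x + \<gamma>)"
    unfolding polar inner_mult_cis_polar[OF W(1)] by simp
  moreover have "\<bar>\<rho>y - \<rho>x\<bar> \<le> 2 * \<epsilon> * norm (cis \<psi>y - cis \<psi>x)"
    using frontier_minkowski_unit_disk_radial_lipschitz[OF R(1,2,4) F] W
    unfolding \<rho>x_def \<rho>y_def by (simp add: norm_mult flip: right_diff_distrib)
  moreover have "1 - \<epsilon> \<le> \<rho>y"
    using frontier_minkowski_unit_disk_norm_ge[OF R(1,2) F(2)] unfolding \<rho>y_def .
  moreover have "\<kappa> \<le> \<bar>sin ((\<psi>y + \<psi>x) / 2 + \<gamma>)\<bar>"
    using kappa(1) sector(1,2) by auto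
  moreover have "\<bar>\<psi>y - \<psi>x\<bar> < 2 * pi"
    using sector by auto
  ultimately have "\<psi>x = \<psi>y \<and> \<rho>x = \<rho>y"
    using polar_cos_eq_imp_eq R(3,4) kappa(2) by blast
  then show ?thesis
    using polar by (metis diff_add_cancel)
qed

lemma continuous_inj_on_between_endpoints:
  fixes f :: "real \<Rightarrow> real"
  assumes "continuous_on {a..b} f" "inj_on f {a..b}" "t \<in> {a..b}"
  shows "min (f a) (f b) \<le> f t \<and> f t \<le> max (f a) (f b)"
proof (cases "t = a \<or> t = b")
  case False
  then show ?thesis
    using continuous_inj_imp_mono[OF _ _ assms(1,2), of t] assms(3) by auto
qed auto

lemma monotone_in_dir_if_strict_mono_on:
  assumes "arc g" "strict_mono_on {0..1} (\<lambda>t. inner v (g t))"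
  shows "monotone_in_dir v (path_image g)"
proof -
  obtain h where "homeomorphism {0..1} (path_image g) g h"
    using homeomorphism_arc[OF assms(1)] by blast
  then show ?thesis
    using assms(2) unfolding monotone_in_dir_def
    by (intro exI[of _ g] exI[of _ h] conjI allI impI) (auto intro: strict_mono_onD[OF assms(2), simplified])
qed

lemma arc_monotone_in_dir_if_inj_on_inner:
  assumes "arc g" "inj_on (inner v) (path_image g)"
  shows "monotone_in_dir v (path_image g)"
proof -
  have "continuous_on {0..1} (\<lambda>t. inner v (g t))"
    using arc_imp_path[OF assms(1)] unfolding path_def by (intro continuous_intros)
  moreover have "inj_on (\<lambda>t. inner v (g t)) {0..1}"
    using assms comp_inj_on[of g "{0..1}" "inner v"] unfolding arc_def path_image_def o_def by blast
  ultimately consider "strict_mono_on {0..1} (\<lambda>t. inner v (g t))"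
    | "strict_antimono_on {0..1} (\<lambda>t. inner v (g t))"
    using injective_eq_monotone_map[of "{0..1}"] by auto
  then show ?thesis
  proof cases
    case 1
    then show ?thesis
      by (rule monotone_in_dir_if_strict_mono_on[OF assms(1)])
  next
    case 2
    then have "strict_mono_on {0..1} (\<lambda>t. inner v (reversepath g t))"
      unfolding reversepath_def monotone_on_def by auto
    then show ?thesis
      using monotone_in_dir_if_strict_mono_on[OF arc_reversepath[OF assms(1)]] by simp
  qed
qed

lemma sin_ge_nine_tenths_mult:
  fixes x :: real
  assumes "0 \<le> x" "x \<le> 0.7"
  shows "0.9 * x \<le> sin x"
proof -
  have "(\<Sum>m<3. sin_coeff m * x ^ m) = x" "fact 3 = (6::real)"
    by (simp_all add: sin_coeff_def numeral_3_eq_3)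
  then have "\<bar>sin x - x\<bar> \<le> inverse 6 * \<bar>x\<bar> ^ 3"
    using Maclaurin_sin_bound[of x 3] by simp
  moreover have "inverse 6 * \<bar>x\<bar> ^ 3 = x ^ 3 / 6"
    using assms(1) by (simp add: field_simps)
  ultimately have "x - x ^ 3 / 6 \<le> sin x"
    by (simp only: abs_le_iff) linarith
  moreover have "x * x \<le> 0.49"
    using assms mult_mono[of x "0.7" x "0.7"] by simp
  then have "x ^ 3 \<le> x * 0.49"
    using assms(1) mult_left_mono[of "x * x" "0.49" x] by (simp add: power3_eq_cube)
  ultimately show ?thesis
    using assms(1) by simp
qed

lemma two_mult_less_sin_seven_mult:
  fixes \<epsilon> :: real
  assumes "0 < \<epsilon>" "\<epsilon> \<le> 0.1"
  shows "2 * \<epsilon> < (1 - \<epsilon>) * sin (7 * \<epsilon>)"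
proof -
  have "0.9 * (7 * \<epsilon>) \<le> sin (7 * \<epsilon>)"
    using assms by (intro sin_ge_nine_tenths_mult) simp_all
  then have "(1 - \<epsilon>) * (0.9 * (7 * \<epsilon>)) \<le> (1 - \<epsilon>) * sin (7 * \<epsilon>)"
    using assms by (intro mult_left_mono) simp_all
  moreover have "2 * \<epsilon> < (1 - \<epsilon>) * (0.9 * (7 * \<epsilon>))"
    using assms mult_right_mono[of "0.9" "1 - \<epsilon>" "0.9 * (7 * \<epsilon>)"] by simp
  ultimately show ?thesis
    by linarith
qed

lemma sin_le_sin_if_between:
  fixes t d :: real
  assumes "0 \<le> d" "d \<le> pi / 2" "d \<le> t" "t \<le> pi - d"
  shows "sin d \<le> sin t"
proof (cases "t \<le> pi / 2")
  case True
  then show ?thesis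
    using assms by (intro sin_monotone_2pi_le) auto
next
  case False
  then have "sin d \<le> sin (pi - t)"
    using assms by (intro sin_monotone_2pi_le) auto
  then show ?thesis
    by simp
qed

lemma sin_le_abs_sin_add:
  fixes d \<eta> \<beta> s :: real
  assumes "0 \<le> d" "d \<le> pi / 2" "0 \<le> s" "s \<le> \<eta>"
    and "(\<eta> + d \<le> \<beta> \<and> \<beta> \<le> pi - \<eta> - d) \<or> (pi + \<eta> + d \<le> \<beta> \<and> \<beta> \<le> 2 * pi - \<eta> - d)"
  shows "sin d \<le> \<bar>sin (\<beta> + s)\<bar>"
  using assms(5)
proof
  assume "\<eta> + d \<le> \<beta> \<and> \<beta> \<le> pi - \<eta> - d"
  then have "sin d \<le> sin (\<beta> + s)"
    using assms(1-4) by (intro sin_le_sin_if_between) auto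
  then show ?thesis
    by simp
next
  assume "pi + \<eta> + d \<le> \<beta> \<and> \<beta> \<le> 2 * pi - \<eta> - d"
  then have "sin d \<le> sin (\<beta> + s - pi)"
    using assms(1-4) by (intro sin_le_sin_if_between) auto
  then show ?thesis
    by simp
qed

lemma sgn_eq_cis_Arg2pi:
  assumes "z \<noteq> 0"
  shows "sgn z = cis (Arg2pi z)"
proof -
  have "z = of_real (norm z) * cis (Arg2pi z)"
    using Arg2pi_eq[of z] by (simp add: cis_conv_exp)
  then show ?thesis
    using assms by (metis nonzero_mult_div_cancel_left norm_eq_zero of_real_eq_0_iff sgn_eq)
qed

lemma sgn_eq_sgn_mult_cis_Arg2pi:
  fixes z p :: complex
  assumes "z \<noteq> 0" "p \<noteq> 0"
  shows "sgn z = sgn p * cis (Arg2pi (z / p))"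
proof -
  have "sgn z = sgn (p * (z / p))"
    using assms(2) by simp
  also have "\<dots> = sgn p * sgn (z / p)"
    by (rule Real_Vector_Spaces.sgn_mult)
  also have "\<dots> = sgn p * cis (Arg2pi (z / p))"
    using assms by (subst sgn_eq_cis_Arg2pi[of "z / p"]) auto
  finally show ?thesis .
qed

lemma unit_eq_sgn_mult_cis_ang:
  fixes u v :: complex
  assumes "norm v = 1" "u \<noteq> 0"
  shows "v = sgn u * cis (- ang u v)"
proof -
  have "v \<noteq> 0" "sgn v = v"
    using assms(1) by (auto simp: sgn_div_norm)
  have "cis (ang u v) = sgn (u / v)"
    using assms(2) \<open>v \<noteq> 0\<close> by (subst sgn_eq_cis_Arg2pi) (auto simp: ang_def)
  also have "\<dots> = sgn u / v"
    using \<open>sgn v = v\<close> by simp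
  finally show ?thesis
    using \<open>v \<noteq> 0\<close> by (simp add: field_simps flip: cis_inverse)
qed

section \<open>Arcs of the frontier inside a sector\<close>

lemma frontier_minkowski_unit_disk_Arg2pi_inj:
  assumes "compact R" "R \<subseteq> cball c \<epsilon>" "\<epsilon> < 1" "q \<in> frontier (R \<oplus> unit_disk)"
  shows "inj_on (\<lambda>z. Arg2pi ((z - c) / (q - c))) (frontier (R \<oplus> unit_disk))"
proof
  fix x y
  assume xy: "x \<in> frontier (R \<oplus> unit_disk)" "y \<in> frontier (R \<oplus> unit_disk)"
    and "Arg2pi ((x - c) / (q - c)) = Arg2pi ((y - c) / (q - c))"
  moreover have "z - c \<noteq> 0" if "z \<in> frontier (R \<oplus> unit_disk)" for z
    using frontier_minkowski_unit_disk_norm_ge[OF assms(1,2) that] assms(3) by auto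
  ultimately have "sgn (x - c) = sgn (y - c)"
    using sgn_eq_sgn_mult_cis_Arg2pi[of _ "q - c"] assms(4) by metis
  then show "x = y"
    by (rule frontier_minkowski_unit_disk_eq_if_sgn_eq[OF assms(1-3) xy])
qed

lemma frontier_minkowski_unit_disk_arc_Arg2pi_between:
  fixes c q :: complex and g :: "real \<Rightarrow> complex"
  defines "\<psi> \<equiv> \<lambda>z. Arg2pi ((z - c) / (q - c))"
  assumes R: "compact R" "R \<subseteq> cball c \<epsilon>" "\<epsilon> < 1"
    and q: "q \<in> frontier (R \<oplus> unit_disk)" "q \<notin> path_image g"
    and g: "arc g" "path_image g \<subseteq> frontier (R \<oplus> unit_disk)"
    and t: "t \<in> {0..1}"
  shows "min (\<psi> (g 0)) (\<psi> (g 1)) \<le> \<psi> (g t) \<and> \<psi> (g t) \<le> max (\<psi> (g 0)) (\<psi> (g 1))"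
proof (rule continuous_inj_on_between_endpoints[OF _ _ t])
  have inj: "inj_on \<psi> (frontier (R \<oplus> unit_disk))"
    unfolding \<psi>_def by (rule frontier_minkowski_unit_disk_Arg2pi_inj[OF R q(1)])
  then show "inj_on (\<lambda>t. \<psi> (g t)) {0..1}"
    using g comp_inj_on[of g "{0..1}" \<psi>] inj_on_subset
    unfolding arc_def path_image_def o_def by blast
  have qc: "q - c \<noteq> 0"
    using frontier_minkowski_unit_disk_norm_ge[OF R(1,2) q(1)] R(3) by auto
  have "(g s - c) / (q - c) \<notin> \<real>\<^sub>\<ge>\<^sub>0" if s: "s \<in> {0..1}" for s
  proof
    assume "(g s - c) / (q - c) \<in> \<real>\<^sub>\<ge>\<^sub>0"
    with qc have "\<psi> (g s) = \<psi> q"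
      unfolding \<psi>_def
      by (simp add: Arg2pi_eq_0[THEN iffD2] complex_nonneg_Reals_iff complex_is_Real_iff)
    moreover have "g s \<in> path_image g"
      using s by (simp add: path_image_def)
    ultimately show False
      using inj g(2) q inj_onD by fastforce
  qed
  moreover have "continuous_on (- \<real>\<^sub>\<ge>\<^sub>0) Arg2pi"
    by (intro continuous_at_imp_continuous_on) (auto intro: continuous_at_Arg2pi)
  moreover have "continuous_on {0..1} (\<lambda>s. (g s - c) / (q - c))"
    using arc_imp_path[OF g(1)] qc unfolding path_def by (intro continuous_intros) auto
  ultimately show "continuous_on {0..1} (\<lambda>t. \<psi> (g t))"
    unfolding \<psi>_def using continuous_on_compose2[of "- \<real>\<^sub>\<ge>\<^sub>0" Arg2pi] by blast
qed

lemma frontier_minkowski_unit_disk_arc_in_sector: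
  fixes a b c q :: complex and g :: "real \<Rightarrow> complex"
  assumes R: "compact R" "R \<subseteq> cball c \<epsilon>" "\<epsilon> < 1"
    and q: "q \<in> frontier (R \<oplus> unit_disk)" "q \<notin> path_image g"
    and g: "arc g" "pathstart g = b" "pathfinish g = a" "path_image g \<subseteq> frontier (R \<oplus> unit_disk)"
    and angles: "Arg2pi ((a - c) / (q - c)) = \<alpha>" "Arg2pi ((b - c) / (a - c)) = \<alpha>"
      "0 < \<alpha>" "\<alpha> < pi"
    and z: "z \<in> path_image g"
  shows "Arg2pi ((z - c) / (q - c)) \<in> {\<alpha>..2 * \<alpha>}"
proof -
  have off_centre: "y - c \<noteq> 0" if "y \<in> frontier (R \<oplus> unit_disk)" for y
    using frontier_minkowski_unit_disk_norm_ge[OF R(1,2) that] R(3) by auto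
  have ab: "a \<in> frontier (R \<oplus> unit_disk)" "b \<in> frontier (R \<oplus> unit_disk)"
    using g pathstart_in_path_image pathfinish_in_path_image by blast+
  have "(b - c) / (q - c) = ((b - c) / (a - c)) * ((a - c) / (q - c))"
    using off_centre[OF ab(1)] by simp
  then have "Arg2pi ((b - c) / (q - c)) = \<alpha> + \<alpha>"
    using Arg2pi_times[of "(b - c) / (a - c)" "(a - c) / (q - c)"] off_centre ab q(1) angles
    by simp
  moreover obtain t where "t \<in> {0..1}" "z = g t"
    using z unfolding path_image_def by auto
  ultimately show ?thesis
    using frontier_minkowski_unit_disk_arc_Arg2pi_between[OF R q g(1,4)] angles(1,3) g(2,3)
    unfolding pathstart_def pathfinish_def by fastforce
qed

lemma frontier_minkowski_unit_disk_arc_monotone_in_dir: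
  fixes a b c q v :: complex and g :: "real \<Rightarrow> complex"
  assumes R: "compact R" "R \<subseteq> cball c \<epsilon>" "0 < \<epsilon>" "\<epsilon> \<le> 0.1"
    and q: "q \<in> frontier (R \<oplus> unit_disk)" "q \<notin> path_image g"
    and angles: "Arg2pi ((a - c) / (q - c)) = \<alpha>" "Arg2pi ((b - c) / (a - c)) = \<alpha>"
      "0 < \<alpha>" "\<alpha> \<le> \<eta>"
    and g: "arc g" "pathstart g = b" "pathfinish g = a" "path_image g \<subseteq> frontier (R \<oplus> unit_disk)"
    and v: "norm v = 1"
      "(\<eta> + 7 * \<epsilon> \<le> ang (a - c) v \<and> ang (a - c) v \<le> pi - \<eta> - 7 * \<epsilon>) \<or>
       (pi + \<eta> + 7 * \<epsilon> \<le> ang (a - c) v \<and> ang (a - c) v \<le> 2 * pi - \<eta> - 7 * \<epsilon>)"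
  shows "monotone_in_dir v (path_image g)"
proof -
  define F where "F = frontier (R \<oplus> unit_disk)"
  define \<psi> where "\<psi> z = Arg2pi ((z - c) / (q - c))" for z
  define \<beta> where "\<beta> = ang (a - c) v"
  have off_centre: "z - c \<noteq> 0" if "z \<in> F" for z
    using frontier_minkowski_unit_disk_norm_ge[OF R(1,2)] that R(4) unfolding F_def by force
  have polar: "sgn (z - c) = sgn (q - c) * cis (\<psi> z)" if "z \<in> F" for z
    using sgn_eq_sgn_mult_cis_Arg2pi off_centre that q(1) unfolding F_def \<psi>_def by blast
  have a: "a \<in> F"
    using g(3,4) pathfinish_in_path_image unfolding F_def by blast
  have "\<alpha> < pi"
    using angles(4) v(2) R(3) pi_gt_zero by linarith
  have sector: "\<psi> z \<in> {\<alpha>..2 * \<alpha>}" if "z \<in> path_image g" for z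
    using frontier_minkowski_unit_disk_arc_in_sector[OF R(1,2) _ q g] angles(1-3) \<open>\<alpha> < pi\<close>
      that R(4) unfolding \<psi>_def by simp
  have "v = sgn (a - c) * cis (- \<beta>)"
    unfolding \<beta>_def by (rule unit_eq_sgn_mult_cis_ang[OF v(1) off_centre[OF a]])
  then have v_polar: "v = sgn (q - c) * cis (- (\<beta> - \<alpha>))"
    using polar[OF a] angles(1) unfolding \<psi>_def by (simp add: cis_mult)
  have "sin (7 * \<epsilon>) \<le> \<bar>sin (\<psi> + (\<beta> - \<alpha>))\<bar>" if "\<psi> \<in> {\<alpha>..2 * \<alpha>}" for \<psi>
    using sin_le_abs_sin_add[of "7 * \<epsilon>" "\<psi> - \<alpha>" \<eta> \<beta>] v(2) R(3,4) angles(4) pi_gt3 that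
    unfolding \<beta>_def by (simp add: algebra_simps)
  then have kappa: "\<forall>\<psi>\<in>{\<alpha>..2 * \<alpha>}. sin (7 * \<epsilon>) \<le> \<bar>sin (\<psi> + (\<beta> - \<alpha>))\<bar>"
    by blast
  have "norm (sgn (q - c)) = 1"
    using off_centre q(1) unfolding F_def by (simp add: norm_sgn)
  have "inj_on (inner v) (path_image g)"
  proof (rule inj_onI)
    fix x y
    assume xy: "x \<in> path_image g" "y \<in> path_image g" "inner v x = inner v y"
    then have "x \<in> F" "y \<in> F"
      using g(4) unfolding F_def by auto
    then show "x = y"
      using frontier_minkowski_unit_disk_inner_eq_imp_eq[OF R(1,2) _ _ _ _
          \<open>norm (sgn (q - c)) = 1\<close> polar polar sector[OF xy(1)] sector[OF xy(2)] _ kappa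
          two_mult_less_sin_seven_mult[OF R(3,4)]]
        xy(3) v_polar R(3,4) \<open>\<alpha> < pi\<close> pi_gt_zero unfolding F_def by simp
  qed
  then show ?thesis
    by (rule arc_monotone_in_dir_if_inj_on_inner[OF g(1)])
qed

lemma axis_square_subset_cball: "axis_square c s \<subseteq> cball c s"
proof
  fix z
  assume "z \<in> axis_square c s"
  then have "\<bar>Re (z - c)\<bar> + \<bar>Im (z - c)\<bar> \<le> s"
    unfolding axis_square_def by simp
  then show "z \<in> cball c s"
    using cmod_le[of "z - c"] by (simp add: dist_norm norm_minus_commute)
qed

lemma compact_if_circular_domain_subset_axis_square:
  assumes "circular_domain R" "R \<subseteq> axis_square c s"
  shows "compact R"
proof -
  have "closed R"
    using assms(1) unfolding circular_domain_def by blast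
  moreover have "bounded R"
    using assms(2) axis_square_subset_cball by (meson bounded_cball bounded_subset subset_trans)
  ultimately show ?thesis
    by (simp add: compact_eq_bounded_closed)
qed

theorem mainTheorem11:
  fixes \<epsilon> :: real and ctr :: complex and R :: "complex set" and \<Lambda> :: nat
    and p :: "nat \<Rightarrow> complex"
  assumes eps: "0 < \<epsilon>" "\<epsilon> \<le> 0.1"
    and R: "circular_domain R" "R \<noteq> {}" "R \<subseteq> axis_square ctr \<epsilon>"
    and Lam: "\<Lambda> \<ge> 10"
    and p_bd: "\<And>i. i \<in> {1..\<Lambda>} \<Longrightarrow> p i \<in> frontier (R \<oplus> unit_disk) \<and> p i \<noteq> ctr"
    and p_ang: "\<And>i. i \<in> {2..\<Lambda>} \<Longrightarrow> ang (p (i - 1) - ctr) (p i - ctr) = 2 * pi / \<Lambda>"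
    and p_ang1: "ang (p \<Lambda> - ctr) (p 1 - ctr) = 2 * pi / \<Lambda>"
  shows "\<forall>i \<in> {1..\<Lambda>}. \<forall>g v.
           (arc g \<and> pathstart g = p (if i = 1 then \<Lambda> else i - 1) \<and> pathfinish g = p i \<and>
            path_image g \<subseteq> frontier (R \<oplus> unit_disk) \<and>
            (\<forall>j \<in> {1..\<Lambda>}. j \<noteq> i \<and> j \<noteq> (if i = 1 then \<Lambda> else i - 1) \<longrightarrow> p j \<notin> path_image g) \<and>
            norm v = 1 \<and>
            ((7 * (1 / \<Lambda> + \<epsilon>) \<le> ang (p i - ctr) v \<and> ang (p i - ctr) v \<le> pi - 7 * (1 / \<Lambda> + \<epsilon>)) \<or>
             (pi + 7 * (1 / \<Lambda> + \<epsilon>) \<le> ang (p i - ctr) v \<and> ang (p i - ctr) v \<le> 2 * pi - 7 * (1 / \<Lambda> + \<epsilon>))))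
           \<longrightarrow> monotone_in_dir v (path_image g)"
proof (intro ballI allI impI, elim conjE)
  fix i g v
  define pr where "pr = (if i = 1 then \<Lambda> else i - 1)"
  define nx where "nx = (if i = \<Lambda> then 1 else i + 1)"
  assume i: "i \<in> {1..\<Lambda>}"
    and g: "arc g" "pathstart g = p (if i = 1 then \<Lambda> else i - 1)" "pathfinish g = p i"
      "path_image g \<subseteq> frontier (R \<oplus> unit_disk)"
    and avoid: "\<forall>j \<in> {1..\<Lambda>}. j \<noteq> i \<and> j \<noteq> (if i = 1 then \<Lambda> else i - 1) \<longrightarrow> p j \<notin> path_image g"
    and v: "norm v = 1"
      "(7 * (1 / \<Lambda> + \<epsilon>) \<le> ang (p i - ctr) v \<and> ang (p i - ctr) v \<le> pi - 7 * (1 / \<Lambda> + \<epsilon>)) \<or>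
       (pi + 7 * (1 / \<Lambda> + \<epsilon>) \<le> ang (p i - ctr) v \<and> ang (p i - ctr) v \<le> 2 * pi - 7 * (1 / \<Lambda> + \<epsilon>))"
  have arg_step: "Arg2pi ((p (if j = 1 then \<Lambda> else j - 1) - ctr) / (p j - ctr)) = 2 * pi / \<Lambda>"
    if "j \<in> {1..\<Lambda>}" for j
    using p_ang[of j] p_ang1 that unfolding ang_def by (cases "j = 1") auto
  have nx: "nx \<in> {1..\<Lambda>}" "nx \<noteq> i" "nx \<noteq> pr" "(if nx = 1 then \<Lambda> else nx - 1) = i"
    using i Lam by (auto simp: pr_def nx_def)
  have "compact R"
    using compact_if_circular_domain_subset_axis_square R(1,3) .
  have q: "p nx \<in> frontier (R \<oplus> unit_disk)" "p nx \<notin> path_image g"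
    using p_bd[OF nx(1)] avoid nx(1-3) unfolding pr_def by auto
  have "Arg2pi ((p i - ctr) / (p nx - ctr)) = 2 * pi / \<Lambda>"
    using arg_step[OF nx(1)] unfolding nx(4) .
  moreover have "0 < 2 * pi / \<Lambda>" "2 * pi / \<Lambda> \<le> 7 / \<Lambda>"
    using Lam pi_approx by (simp_all add: divide_right_mono)
  moreover have "(7 / \<Lambda> + 7 * \<epsilon> \<le> ang (p i - ctr) v \<and> ang (p i - ctr) v \<le> pi - 7 / \<Lambda> - 7 * \<epsilon>) \<or>
      (pi + 7 / \<Lambda> + 7 * \<epsilon> \<le> ang (p i - ctr) v \<and> ang (p i - ctr) v \<le> 2 * pi - 7 / \<Lambda> - 7 * \<epsilon>)"
    using v(2) by (simp add: distrib_left diff_diff_eq add.assoc)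
  ultimately show "monotone_in_dir v (path_image g)"
    using frontier_minkowski_unit_disk_arc_monotone_in_dir[OF \<open>compact R\<close> _ eps q]
      arg_step[OF i] R(3) axis_square_subset_cball g v(1)
    unfolding pr_def by blast
qed

end
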